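(* Let $\mathcal{T}$ be a planar triangulation, let $m\in\mathbb{Z}_{\ge 0}$ and $r\in\mathbb{Z}_{\ge -1}$, and let $\mathbf{r}$ be a smoothness distribution with $\mathbf{r}(\tau)\in\{r,-1\}$ for every interior edge $\tau$. Assume $\mathcal{Q}^{\mathbf{r}}$ is lower-acyclic. Let $\tau$ be an interior edge with end-points $\gamma$ and $\gamma'$ such that $\mathbf{r}(\tau)=r$. If $\tau'$ is an interior edge incident on $\gamma$ with $\mathbf{r}(\tau')=-1$, then $\mathcal{Q}^{\mathbf{s}}$ is also lower-acyclic, where $\mathbf{s}(\tau'')=\mathbf{r}(\tau'')$ for every interior edge $\tau''\neq\tau$ and $\mathbf{s}(\tau)=-1$.
   Context: $\mathcal{T}$ is a finite planar mesh: a subdivision of a closed polygonal region $\Omega\subset\mathbb{R}^2$ (possibly not simply connected) into closed polygonal faces (here triangles) meeting along straight edges and vertices. $\mathcal{T}_2,\mathcal{T}_1,\mathcal{T}_0$ denote the faces, edges and vertices; an edge or vertex is interior if it is not contained in $\partial\Omega$, and $\mathcal{T}^\circ_1,\mathcal{T}^\circ_0$ denote the interior edges and interior vertices. ${\mathcal{P}}_m$ is the space of real bivariate polynomials of total degree at most $m$; for polynomials $f_1,\dots,f_k$, $\langle f_1,\dots,f_k\rangle$ denotes the subspace of ${\mathcal{P}}_m$ consisting of all polynomial combinations $\sum g_if_i$ lying in ${\mathcal{P}}_m$. A smoothness distribution is a map $\mathbf{r}:\mathcal{T}^\circ_1\to\mathbb{Z}_{\ge -1}$. For $\tau\in\mathcal{T}^\circ_1$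 let $\ell_\tau$ be a nonzero affine-linear polynomial vanishing on $\tau$ and put $\mathfrak{J}^{\mathbf r}_\tau=\langle \ell_\tau^{\mathbf r(\tau)+1}\rangle$ (which is all of ${\mathcal{P}}_m$ when $\mathbf r(\tau)=-1$); for $\gamma\in\mathcal{T}^\circ_0$ put $\mathfrak{J}^{\mathbf r}_\gamma=\sum_{\tau\ni\gamma}\mathfrak{J}^{\mathbf r}_\tau$, the sum over interior edges containing $\gamma$. After fixing orientations of faces and edges, $\mathcal{C}$ is the chain complex $\bigoplus_{\sigma\in\mathcal{T}_2}{\mathcal{P}}_m\xrightarrow{\partial_2}\bigoplus_{\tau\in\mathcal{T}^\circ_1}{\mathcal{P}}_m\xrightarrow{\partial_1}\bigoplus_{\gamma\in\mathcal{T}^\circ_0}{\mathcal{P}}_m$ (in homological degrees $2,1,0$) whose maps are the cellular boundary maps of $\mathcal{T}$ relative to $\partial\Omega$ (incidence signs $\pm1$, boundary edges and vertices omitted). $\mathcal{I}^{\mathbf r}$ is the subcomplex $0\to\bigoplus_{\tau\in\mathcal{T}^\circ_1}\mathfrak{J}^{\mathbf r}_\tau\to\bigoplus_{\gamma\in\mathcal{T}^\circ_0}\mathfrak{J}^{\mathbf r}_\gamma$, and $\mathcal{Q}^{\mathbf r}=\mathcal{C}/\mathcal{I}^{\mathbf r}$. Then $H_2(\mathcal{Q}^{\mathbf r})$ is the spline space of piecewise polynomials in ${\mathcal{P}}_m$ on each face that are $C^{\mathbf r(\tau)}$ across each interior edge $\tau$. $\mathcal{Q}^{\mathbf r}$ is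 called lower-acyclic if $H_1(\mathcal{Q}^{\mathbf r})=H_0(\mathcal{Q}^{\mathbf r})=0$. *)

theory Defs
  imports "HOL-Analysis.Analysis"
begin

type_synonym pt = "real \<times> real"

definition lexless :: "pt \<Rightarrow> pt \<Rightarrow> bool" where
  "lexless a b \<longleftrightarrow> fst a < fst b \<or> (fst a = fst b \<and> snd a < snd b)"

definition cross :: "pt \<Rightarrow> pt \<Rightarrow> real" where
  "cross u v = fst u * snd v - snd u * fst v"

text \<open>A mesh is given by its set of (closed, triangular) faces, each face being
  represented by its set of three vertices; the face itself is the convex hull.\<close>

definition region :: "pt set set \<Rightarrow> pt set" where
  "region F = (\<Union>\<sigma>\<in>F. convex hull \<sigma>)"

definition is_triangulation :: "pt set set \<Rightarrow> bool" where
  "is_triangulation F \<longleftrightarrow> finite F \<and> F \<noteq> {} \<and>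
     (\<forall>\<sigma>\<in>F. card \<sigma> = 3 \<and> \<not> collinear \<sigma>) \<and>
     (\<forall>\<sigma>\<in>F. \<forall>\<sigma>'\<in>F. convex hull \<sigma> \<inter> convex hull \<sigma>' = convex hull (\<sigma> \<inter> \<sigma>')) \<and>
     connected (region F)"

definition edges :: "pt set set \<Rightarrow> pt set set" where
  "edges F = {\<tau>. \<exists>\<sigma>\<in>F. \<tau> \<subseteq> \<sigma> \<and> card \<tau> = 2}"

definition vertices :: "pt set set \<Rightarrow> pt set" where
  "vertices F = \<Union>F"

definition int_edges :: "pt set set \<Rightarrow> pt set set" where
  "int_edges F = {\<tau>\<in>edges F. \<not> (convex hull \<tau> \<subseteq> frontier (region F))}"

definition int_vertices :: "pt set set \<Rightarrow> pt set" where
  "int_vertices F = {\<gamma>\<in>vertices F. \<gamma> \<notin> frontier (region F)}"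

definition poly_deg :: "nat \<Rightarrow> (pt \<Rightarrow> real) set" where
  "poly_deg m = {p. \<exists>c::nat \<Rightarrow> nat \<Rightarrow> real.
      p = (\<lambda>z. \<Sum>i\<le>m. \<Sum>j\<le>m - i. c i j * fst z ^ i * snd z ^ j)}"

definition polys :: "(pt \<Rightarrow> real) set" where
  "polys = (\<Union>m. poly_deg m)"

text \<open>A fixed nonzero affine form vanishing on the edge \<open>\<tau> = {a,b}\<close>.\<close>
definition ell :: "pt set \<Rightarrow> pt \<Rightarrow> real" where
  "ell \<tau> z = (\<Sum>a\<in>\<tau>. \<Sum>b\<in>\<tau>. if lexless a b then cross (b - a) (z - a) else 0)"

definition J_edge :: "nat \<Rightarrow> (pt set \<Rightarrow> int) \<Rightarrow> pt set \<Rightarrow> (pt \<Rightarrow> real) set" where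
  "J_edge m rr \<tau> = {p \<in> poly_deg m. \<exists>g\<in>polys. \<forall>z. p z = g z * ell \<tau> z ^ nat (rr \<tau> + 1)}"

definition J_vert :: "pt set set \<Rightarrow> nat \<Rightarrow> (pt set \<Rightarrow> int) \<Rightarrow> pt \<Rightarrow> (pt \<Rightarrow> real) set" where
  "J_vert F m rr \<gamma> = {q. \<exists>p. (\<forall>\<tau>\<in>int_edges F. \<gamma> \<in> \<tau> \<longrightarrow> p \<tau> \<in> J_edge m rr \<tau>) \<and>
      q = (\<lambda>z. \<Sum>\<tau>\<in>{\<tau>\<in>int_edges F. \<gamma> \<in> \<tau>}. p \<tau> z)}"

text \<open>Orientations: faces counterclockwise, edges from the lexicographically
  smaller to the larger end-point.\<close>

definition inc :: "pt set \<Rightarrow> pt set \<Rightarrow> real" where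
  "inc \<sigma> \<tau> = (\<Sum>a\<in>\<tau>. \<Sum>b\<in>\<tau>. \<Sum>c\<in>\<sigma> - \<tau>.
      if lexless a b then sgn (cross (b - a) (c - a)) else 0)"

definition vinc :: "pt set \<Rightarrow> pt \<Rightarrow> real" where
  "vinc \<tau> \<gamma> = (\<Sum>\<delta>\<in>\<tau> - {\<gamma>}. if lexless \<delta> \<gamma> then 1 else -1)"

definition bd2 :: "pt set set \<Rightarrow> (pt set \<Rightarrow> pt \<Rightarrow> real) \<Rightarrow> pt set \<Rightarrow> pt \<Rightarrow> real" where
  "bd2 F u \<tau> = (\<lambda>z. \<Sum>\<sigma>\<in>{\<sigma>\<in>F. \<tau> \<subseteq> \<sigma>}. inc \<sigma> \<tau> * u \<sigma> z)"

definition bd1 :: "pt set set \<Rightarrow> (pt set \<Rightarrow> pt \<Rightarrow> real) \<Rightarrow> pt \<Rightarrow> pt \<Rightarrow> real" where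
  "bd1 F w \<gamma> = (\<lambda>z. \<Sum>\<tau>\<in>{\<tau>\<in>int_edges F. \<gamma> \<in> \<tau>}. vinc \<tau> \<gamma> * w \<tau> z)"

text \<open>\<open>H_1(Q) = 0\<close>: every chain in \<open>C_1\<close> whose boundary lies in \<open>I_0\<close> is a boundary
  modulo \<open>I_1\<close>.  \<open>H_0(Q) = 0\<close>: \<open>C_0 = \<partial>_1 C_1 + I_0\<close>.\<close>

definition H1_vanishes :: "pt set set \<Rightarrow> nat \<Rightarrow> (pt set \<Rightarrow> int) \<Rightarrow> bool" where
  "H1_vanishes F m rr \<longleftrightarrow>
    (\<forall>w. (\<forall>\<tau>\<in>int_edges F. w \<tau> \<in> poly_deg m) \<and>
         (\<forall>\<gamma>\<in>int_vertices F. bd1 F w \<gamma> \<in> J_vert F m rr \<gamma>) \<longrightarrow>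
       (\<exists>u b. (\<forall>\<sigma>\<in>F. u \<sigma> \<in> poly_deg m) \<and>
              (\<forall>\<tau>\<in>int_edges F. b \<tau> \<in> J_edge m rr \<tau> \<and>
                   w \<tau> = (\<lambda>z. bd2 F u \<tau> z + b \<tau> z))))"

definition H0_vanishes :: "pt set set \<Rightarrow> nat \<Rightarrow> (pt set \<Rightarrow> int) \<Rightarrow> bool" where
  "H0_vanishes F m rr \<longleftrightarrow>
    (\<forall>d. (\<forall>\<gamma>\<in>int_vertices F. d \<gamma> \<in> poly_deg m) \<longrightarrow>
       (\<exists>w e. (\<forall>\<tau>\<in>int_edges F. w \<tau> \<in> poly_deg m) \<and>
              (\<forall>\<gamma>\<in>int_vertices F. e \<gamma> \<in> J_vert F m rr \<gamma> \<and>
                   d \<gamma> = (\<lambda>z. bd1 F w \<gamma> z + e \<gamma> z))))"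

definition lower_acyclic :: "pt set set \<Rightarrow> nat \<Rightarrow> (pt set \<Rightarrow> int) \<Rightarrow> bool" where
  "lower_acyclic F m rr \<longleftrightarrow> H1_vanishes F m rr \<and> H0_vanishes F m rr"

end

theory Submission
  imports Defs
begin

text \<open>Dropping the condition on \<open>\<tau>\<close> only enlarges the ideals of \<open>\<I>\<close>, so \<open>H\<^sub>0\<close> stays
  zero.  For \<open>H\<^sub>1\<close>, let \<open>w\<close> be a cycle of \<open>\<Q>\<^sup>s\<close>.  At the far end-point \<open>\<gamma>'\<close> of \<open>\<tau>\<close>,
  the vertex ideals for \<open>s\<close> and \<open>r\<close> differ only by an unrestricted \<open>\<tau>\<close>-component,
  so \<open>\<partial>w(\<gamma>')\<close> is an element of the \<open>r\<close>-ideal plus some polynomial \<open>q\<close>.  Subtracting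
  \<open>\<plusminus>q\<close> from \<open>w\<close> on \<open>\<tau>\<close> makes \<open>w\<close> a cycle of \<open>\<Q>\<^sup>r\<close>; at \<open>\<gamma>\<close> nothing is lost because
  the unconstrained edge \<open>\<tau>'\<close> already makes the \<open>r\<close>-ideal at \<open>\<gamma>\<close> all of \<open>\<P>\<^sub>m\<close>.
  Lower-acyclicity of \<open>\<Q>\<^sup>r\<close> writes the corrected chain as a boundary modulo \<open>\<I>\<^sup>r\<close>,
  and putting \<open>\<plusminus>q\<close> back into the \<open>\<tau>\<close>-component, which is unconstrained for \<open>s\<close>,
  does the same for \<open>w\<close> modulo \<open>\<I>\<^sup>s\<close>.\<close>

lemma poly_deg_lincomb:
  assumes "p \<in> poly_deg m" "q \<in> poly_deg m"
  shows "(\<lambda>z. a * p z + b * q z) \<in> poly_deg m"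
proof -
  obtain c1 where c1: "p = (\<lambda>z. \<Sum>i\<le>m. \<Sum>j\<le>m - i. c1 i j * fst z ^ i * snd z ^ j)"
    using assms(1) unfolding poly_deg_def by blast
  obtain c2 where c2: "q = (\<lambda>z. \<Sum>i\<le>m. \<Sum>j\<le>m - i. c2 i j * fst z ^ i * snd z ^ j)"
    using assms(2) unfolding poly_deg_def by blast
  show ?thesis
    unfolding poly_deg_def
    by (intro CollectI exI[of _ "\<lambda>i j. a * c1 i j + b * c2 i j"])
      (auto simp: c1 c2 sum_distrib_left sum.distrib algebra_simps)
qed

lemma poly_deg_zero: "(\<lambda>z. 0) \<in> poly_deg m"
  unfolding poly_deg_def by (intro CollectI exI[of _ "\<lambda>i j. 0"]) simp

lemma poly_deg_add: "p \<in> poly_deg m \<Longrightarrow> q \<in> poly_deg m \<Longrightarrow> (\<lambda>z. p z + q z) \<in> poly_deg m"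
  using poly_deg_lincomb[of p m q 1 1] by simp

lemma poly_deg_diff: "p \<in> poly_deg m \<Longrightarrow> q \<in> poly_deg m \<Longrightarrow> (\<lambda>z. p z - q z) \<in> poly_deg m"
  using poly_deg_lincomb[of p m q 1 "-1"] by simp

lemma poly_deg_scale: "p \<in> poly_deg m \<Longrightarrow> (\<lambda>z. a * p z) \<in> poly_deg m"
  using poly_deg_lincomb[of p m p a 0] by simp

lemma poly_deg_sum:
  assumes "\<forall>i\<in>A. f i \<in> poly_deg m"
  shows "(\<lambda>z. \<Sum>i\<in>A. f i z) \<in> poly_deg m"
proof (cases "finite A")
  case True
  then show ?thesis
    using assms
  proof (induction A rule: finite_induct)
    case empty
    then show ?case using poly_deg_zero by simp
  next
    case (insert x A)
    then show ?case using poly_deg_add[of "f x" m "\<lambda>z. \<Sum>i\<in>A. f i z"] by simp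
  qed
next
  case False
  then show ?thesis using poly_deg_zero by simp
qed

lemma finite_int_edges:
  assumes "is_triangulation F"
  shows "finite (int_edges F)"
proof -
  have "finite F" and faces_finite: "\<And>\<sigma>. \<sigma> \<in> F \<Longrightarrow> finite \<sigma>"
    using assms unfolding is_triangulation_def by (auto intro: card_ge_0_finite)
  then have "finite (Pow (\<Union>F))" by blast
  moreover have "int_edges F \<subseteq> Pow (\<Union>F)"
    unfolding int_edges_def edges_def by auto
  ultimately show ?thesis by (rule finite_subset[rotated])
qed

lemma card_int_edge: "t \<in> int_edges F \<Longrightarrow> card t = 2"
  unfolding int_edges_def edges_def by auto

lemma vinc_mult_self:
  assumes "x \<noteq> y"
  shows "vinc {x, y} y * vinc {x, y} y = 1"
  using assms unfolding vinc_def by (simp add: insert_Diff_if)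

lemma J_edge_subset_poly_deg: "J_edge m rr t \<subseteq> poly_deg m"
  unfolding J_edge_def by blast

lemma zero_in_J_edge: "(\<lambda>z. 0) \<in> J_edge m rr t"
  unfolding J_edge_def polys_def using poly_deg_zero by force

lemma J_edge_minus_one: "rr t = -1 \<Longrightarrow> J_edge m rr t = poly_deg m"
  unfolding J_edge_def polys_def by auto

lemma J_edge_fun_upd_other: "t' \<noteq> t \<Longrightarrow> J_edge m (rr(t := k)) t' = J_edge m rr t'"
  unfolding J_edge_def by simp

lemma J_edge_subset_fun_upd_minus_one: "J_edge m rr t' \<subseteq> J_edge m (rr(t := -1)) t'"
  by (cases "t' = t") (simp_all add: J_edge_subset_poly_deg J_edge_minus_one J_edge_fun_upd_other)

lemma J_vert_subset_poly_deg: "J_vert F m rr x \<subseteq> poly_deg m"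
proof
  fix q
  assume "q \<in> J_vert F m rr x"
  then obtain p where p: "\<forall>t\<in>int_edges F. x \<in> t \<longrightarrow> p t \<in> J_edge m rr t"
    and q: "q = (\<lambda>z. \<Sum>t\<in>{t\<in>int_edges F. x \<in> t}. p t z)"
    unfolding J_vert_def by blast
  show "q \<in> poly_deg m"
    unfolding q using p J_edge_subset_poly_deg by (intro poly_deg_sum) blast
qed

lemma J_vert_mono:
  assumes "\<And>t. J_edge m rr t \<subseteq> J_edge m ss t"
  shows "J_vert F m rr x \<subseteq> J_vert F m ss x"
  unfolding J_vert_def using assms by blast

lemma J_vert_fun_upd_notin:
  assumes "x \<notin> t"
  shows "J_vert F m (rr(t := k)) x = J_vert F m rr x"
proof -
  have "\<And>t'. x \<in> t' \<Longrightarrow> J_edge m (rr(t := k)) t' = J_edge m rr t'"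
    using assms J_edge_fun_upd_other by blast
  then show ?thesis
    unfolding J_vert_def by (intro Collect_cong) (metis (no_types, lifting))
qed

lemma J_vert_eq_poly_deg:
  assumes "finite (int_edges F)" "t \<in> int_edges F" "x \<in> t" "rr t = -1"
  shows "J_vert F m rr x = poly_deg m"
proof
  show "poly_deg m \<subseteq> J_vert F m rr x"
  proof
    fix q
    assume q: "q \<in> poly_deg m"
    let ?p = "\<lambda>t' z. if t' = t then q z else 0"
    have "q = (\<lambda>z. \<Sum>t'\<in>{t'\<in>int_edges F. x \<in> t'}. ?p t' z)"
      using assms by (simp add: sum.delta)
    moreover have "?p t' \<in> J_edge m rr t'" for t'
      using q assms(4) by (cases "t' = t") (simp_all add: J_edge_minus_one zero_in_J_edge)
    ultimately show "q \<in> J_vert F m rr x"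
      unfolding J_vert_def by (intro CollectI exI[of _ ?p]) auto
  qed
qed (rule J_vert_subset_poly_deg)

lemma J_vert_fun_upd_minus_one_decompose:
  assumes "finite (int_edges F)" "t \<in> int_edges F" "x \<in> t"
    and "f \<in> J_vert F m (rr(t := -1)) x"
  obtains q where "q \<in> poly_deg m" "(\<lambda>z. f z - q z) \<in> J_vert F m rr x"
proof -
  let ?E = "{t'\<in>int_edges F. x \<in> t'}"
  obtain p where p: "\<forall>t'\<in>int_edges F. x \<in> t' \<longrightarrow> p t' \<in> J_edge m (rr(t := -1)) t'"
    and f: "f = (\<lambda>z. \<Sum>t'\<in>?E. p t' z)"
    using assms(4) unfolding J_vert_def by blast
  have "p t \<in> J_edge m (rr(t := -1)) t"
    using p assms(2,3) by blast
  then have "p t \<in> poly_deg m"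
    by (simp add: J_edge_minus_one)
  moreover have "(\<lambda>z. f z - p t z) = (\<lambda>z. \<Sum>t'\<in>?E. (p(t := (\<lambda>z. 0))) t' z)"
  proof
    fix z
    have "(\<Sum>t'\<in>?E. (p(t := (\<lambda>z. 0))) t' z) = (\<Sum>t'\<in>?E. p t' z - (if t' = t then p t z else 0))"
      by (intro sum.cong) auto
    then show "f z - p t z = (\<Sum>t'\<in>?E. (p(t := (\<lambda>z. 0))) t' z)"
      using assms(1-3) by (simp add: f sum_subtractf sum.delta)
  qed
  moreover have "\<forall>t'\<in>int_edges F. x \<in> t' \<longrightarrow> (p(t := (\<lambda>z. 0))) t' \<in> J_edge m rr t'"
    using p by (metis fun_upd_apply zero_in_J_edge J_edge_fun_upd_other)
  ultimately show ?thesis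
    using that unfolding J_vert_def by blast
qed

lemma bd1_poly_deg:
  assumes "\<forall>t\<in>int_edges F. w t \<in> poly_deg m"
  shows "bd1 F w x \<in> poly_deg m"
  unfolding bd1_def using assms by (intro poly_deg_sum) (auto intro: poly_deg_scale)

lemma bd1_fun_upd_notin: "x \<notin> t \<Longrightarrow> bd1 F (w(t := v)) x = bd1 F w x"
  unfolding bd1_def by (intro ext sum.cong) auto

lemma bd1_fun_upd:
  assumes "finite (int_edges F)" "t \<in> int_edges F" "x \<in> t"
  shows "bd1 F (w(t := v)) x = (\<lambda>z. bd1 F w x z + vinc t x * (v z - w t z))"
proof
  fix z
  let ?E = "{t'\<in>int_edges F. x \<in> t'}"
  have "bd1 F (w(t := v)) x z
      = (\<Sum>t'\<in>?E. vinc t' x * w t' z + (if t' = t then vinc t x * (v z - w t z) else 0))"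
    unfolding bd1_def by (intro sum.cong) (auto simp: algebra_simps)
  also have "\<dots> = bd1 F w x z + vinc t x * (v z - w t z)"
    unfolding bd1_def using assms by (simp add: sum.distrib sum.delta)
  finally show "bd1 F (w(t := v)) x z = bd1 F w x z + vinc t x * (v z - w t z)" .
qed

lemma H0_vanishes_mono:
  assumes "H0_vanishes F m rr" "\<And>x. J_vert F m rr x \<subseteq> J_vert F m ss x"
  shows "H0_vanishes F m ss"
  unfolding H0_vanishes_def
proof (intro allI impI)
  fix d
  assume "\<forall>x\<in>int_vertices F. d x \<in> poly_deg m"
  then obtain w e where "\<forall>t\<in>int_edges F. w t \<in> poly_deg m"
    and "\<forall>x\<in>int_vertices F. e x \<in> J_vert F m rr x \<and> d x = (\<lambda>z. bd1 F w x z + e x z)"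
    using assms(1) unfolding H0_vanishes_def by blast
  then show "\<exists>w e. (\<forall>t\<in>int_edges F. w t \<in> poly_deg m) \<and>
      (\<forall>x\<in>int_vertices F. e x \<in> J_vert F m ss x \<and> d x = (\<lambda>z. bd1 F w x z + e x z))"
    using assms(2) by blast
qed

lemma cycle_correction_along_edge:
  assumes fin: "finite (int_edges F)"
    and t: "t \<in> int_edges F" "t = {\<gamma>, \<gamma>'}" "\<gamma> \<noteq> \<gamma>'"
    and J_\<gamma>: "J_vert F m rr \<gamma> = poly_deg m"
    and w_poly: "\<forall>e\<in>int_edges F. w e \<in> poly_deg m"
    and w_cycle: "\<forall>x\<in>int_vertices F. bd1 F w x \<in> J_vert F m (rr(t := -1)) x"
  obtains q where "q \<in> poly_deg m"
    and "\<forall>x\<in>int_vertices F. bd1 F (w(t := (\<lambda>z. w t z - q z))) x \<in> J_vert F m rr x"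
proof -
  obtain q where q: "q \<in> poly_deg m"
    and q_\<gamma>': "\<gamma>' \<in> int_vertices F \<Longrightarrow> (\<lambda>z. bd1 F w \<gamma>' z - q z) \<in> J_vert F m rr \<gamma>'"
  proof (cases "\<gamma>' \<in> int_vertices F")
    case True
    then show ?thesis
      using that w_cycle J_vert_fun_upd_minus_one_decompose[OF fin t(1)] t(2) by blast
  next
    case False
    then show ?thesis using that poly_deg_zero by blast
  qed
  \<comment> \<open>the sign \<open>c\<close> makes the change of \<open>\<partial>w\<close> at \<open>\<gamma>'\<close> exactly \<open>-q\<close>\<close>
  define c where "c = vinc t \<gamma>'"
  let ?w' = "w(t := (\<lambda>z. w t z - c * q z))"
  have "bd1 F ?w' x \<in> J_vert F m rr x" if x: "x \<in> int_vertices F" for x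
  proof -
    consider "x \<notin> t" | "x = \<gamma>" | "x = \<gamma>'"
      using t(2) by blast
    then show ?thesis
    proof cases
      case 1
      have "bd1 F w x \<in> J_vert F m (rr(t := -1)) x"
        using w_cycle x by blast
      then show ?thesis
        using 1 by (simp add: bd1_fun_upd_notin J_vert_fun_upd_notin)
    next
      case 2
      have "\<forall>e\<in>int_edges F. ?w' e \<in> poly_deg m"
        using w_poly q by (auto intro: poly_deg_diff poly_deg_scale)
      then show ?thesis
        using 2 J_\<gamma> bd1_poly_deg by blast
    next
      case 3
      have "c * c = 1"
        unfolding c_def t(2) using t(3) by (rule vinc_mult_self)
      have "\<gamma>' \<in> t"
        using t(2) by blast
      then have "bd1 F ?w' \<gamma>' = (\<lambda>z. bd1 F w \<gamma>' z + c * ((w t z - c * q z) - w t z))"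
        using bd1_fun_upd[OF fin t(1)] by (simp add: c_def)
      also have "\<dots> = (\<lambda>z. bd1 F w \<gamma>' z - (c * c) * q z)"
        by (simp add: algebra_simps)
      also have "\<dots> = (\<lambda>z. bd1 F w \<gamma>' z - q z)"
        using \<open>c * c = 1\<close> by simp
      finally show ?thesis
        using q_\<gamma>' x 3 by simp
    qed
  qed
  then show ?thesis
    using that[of "\<lambda>z. c * q z"] q poly_deg_scale by blast
qed

lemma H1_vanishes_fun_upd_minus_one:
  assumes fin: "finite (int_edges F)" and H1: "H1_vanishes F m rr"
    and t: "t \<in> int_edges F" "t = {\<gamma>, \<gamma>'}" "\<gamma> \<noteq> \<gamma>'"
    and J_\<gamma>: "J_vert F m rr \<gamma> = poly_deg m"
  shows "H1_vanishes F m (rr(t := -1))"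
  unfolding H1_vanishes_def
proof (intro allI impI, elim conjE)
  fix w
  assume w_poly: "\<forall>e\<in>int_edges F. w e \<in> poly_deg m"
    and w_cycle: "\<forall>x\<in>int_vertices F. bd1 F w x \<in> J_vert F m (rr(t := -1)) x"
  obtain q where q: "q \<in> poly_deg m"
    and w'_cycle: "\<forall>x\<in>int_vertices F. bd1 F (w(t := (\<lambda>z. w t z - q z))) x \<in> J_vert F m rr x"
    using cycle_correction_along_edge[OF fin t J_\<gamma> w_poly w_cycle] by blast
  have "\<forall>e\<in>int_edges F. (w(t := (\<lambda>z. w t z - q z))) e \<in> poly_deg m"
    using w_poly q by (auto intro: poly_deg_diff)
  then obtain u b where u: "\<forall>\<sigma>\<in>F. u \<sigma> \<in> poly_deg m"
    and b: "\<forall>e\<in>int_edges F. b e \<in> J_edge m rr e \<and>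
              (w(t := (\<lambda>z. w t z - q z))) e = (\<lambda>z. bd2 F u e z + b e z)"
    using H1 w'_cycle unfolding H1_vanishes_def by blast
  let ?b' = "b(t := (\<lambda>z. b t z + q z))"
  have "?b' e \<in> J_edge m (rr(t := -1)) e \<and> w e = (\<lambda>z. bd2 F u e z + ?b' e z)"
    if e: "e \<in> int_edges F" for e
  proof (cases "e = t")
    case True
    have "b t \<in> poly_deg m"
      using b t(1) J_edge_subset_poly_deg by blast
    then have "?b' t \<in> J_edge m (rr(t := -1)) t"
      using q by (simp add: J_edge_minus_one poly_deg_add)
    moreover have "w t = (\<lambda>z. bd2 F u t z + ?b' t z)"
    proof
      fix z
      show "w t z = bd2 F u t z + ?b' t z"
        using fun_cong[OF conjunct2[OF bspec[OF b t(1)]], of z] by simp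
    qed
    ultimately show ?thesis
      using True by simp
  next
    case False
    have "b e \<in> J_edge m rr e" "(w(t := (\<lambda>z. w t z - q z))) e = (\<lambda>z. bd2 F u e z + b e z)"
      using b e by blast+
    then show ?thesis
      using False by (simp add: J_edge_fun_upd_other)
  qed
  then show "\<exists>u b. (\<forall>\<sigma>\<in>F. u \<sigma> \<in> poly_deg m) \<and>
      (\<forall>e\<in>int_edges F. b e \<in> J_edge m (rr(t := -1)) e \<and> w e = (\<lambda>z. bd2 F u e z + b e z))"
    using u by blast
qed

theorem mainTheorem1:
  fixes F :: "pt set set" and m :: nat and r :: int
    and rr :: "pt set \<Rightarrow> int" and \<tau> \<tau>' :: "pt set" and \<gamma> :: pt
  assumes "is_triangulation F"
    and "r \<ge> -1"
    and "\<forall>\<tau>''\<in>int_edges F. rr \<tau>'' \<in> {r, -1}"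
    and "lower_acyclic F m rr"
    and "\<tau> \<in> int_edges F" and "\<gamma> \<in> \<tau>" and "rr \<tau> = r"
    and "\<tau>' \<in> int_edges F" and "\<gamma> \<in> \<tau>'" and "rr \<tau>' = -1"
  shows "lower_acyclic F m (rr(\<tau> := -1))"
proof -
  \<comment> \<open>of the triangulation only finiteness is used\<close>
  have fin: "finite (int_edges F)"
    using assms(1) by (rule finite_int_edges)
  obtain \<gamma>' where \<tau>: "\<tau> = {\<gamma>, \<gamma>'}" "\<gamma> \<noteq> \<gamma>'"
    using card_int_edge[OF assms(5)] assms(6) by (metis card_2_iff doubleton_eq_iff insertE singletonD)
  have J_\<gamma>: "J_vert F m rr \<gamma> = poly_deg m"
    using fin assms(8-10) by (rule J_vert_eq_poly_deg)
  have "H0_vanishes F m (rr(\<tau> := -1))"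
    using assms(4) J_vert_mono[OF J_edge_subset_fun_upd_minus_one]
    unfolding lower_acyclic_def by (blast intro: H0_vanishes_mono)
  moreover have "H1_vanishes F m (rr(\<tau> := -1))"
    using assms(4) H1_vanishes_fun_upd_minus_one[OF fin _ assms(5) \<tau> J_\<gamma>]
    unfolding lower_acyclic_def by blast
  ultimately show ?thesis
    unfolding lower_acyclic_def by blast
qed

end
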